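(* Let $J'=(z_w,z_w')$ be a nonempty open interval, let $r:J'\to\mathbb{R}$ be differentiable and non-increasing, and let $h:J'\to\mathbb{R}$ be differentiable with $\dot h(z)=1+h(z)^2-2r(z)h(z)$ on $J'$, having exactly one zero $z_*\in J'$. Consider Newton's iteration $z_{n+1}=N(z_n)$ with $N(z)=z-\dfrac{h(z)}{1+h(z)^2-2r(z)h(z)}$. (1) If $r(z)>0$ for all $z\in(z_w,z_* )$, then for every $z_0\in(z_w,z_* )$ the iterates are well defined and $(z_n)$ increases monotonically to $z_*$. (2) If $r(z)<0$ for all $z\in(z_*,z_w')$, then for every $z_0\in(z_*,z_w')$ the iterates are well defined and $(z_n)$ decreases monotonically to $z_*$.
   Context: $\dot{}$ denotes differentiation with respect to $z$. Here $h<0$ on $(z_w,z_* )$ and $h>0$ on $(z_*,z_w')$. *)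

theory Defs
  imports Complex_Main
begin

definition newton_map :: "(real \<Rightarrow> real) \<Rightarrow> (real \<Rightarrow> real) \<Rightarrow> real \<Rightarrow> real" where
  "newton_map h r z = z - h z / (1 + (h z)\<^sup>2 - 2 * r z * h z)"

definition iterates_well_defined ::
  "real \<Rightarrow> real \<Rightarrow> (real \<Rightarrow> real) \<Rightarrow> (real \<Rightarrow> real) \<Rightarrow> real \<Rightarrow> bool" where
  "iterates_well_defined a b h r z0 \<longleftrightarrow>
     (\<forall>n. (newton_map h r ^^ n) z0 \<in> {a<..<b} \<and>
          1 + (h ((newton_map h r ^^ n) z0))\<^sup>2 - 2 * r ((newton_map h r ^^ n) z0) * h ((newton_map h r ^^ n) z0) \<noteq> 0)"

end

theory Submission
  imports Defs
begin

text \<open>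
  Left of \<open>z\<^sub>*\<close> the solution \<open>h\<close> is negative (it crosses its only zero with slope
  \<open>h'(z\<^sub>*) = 1\<close>), so for \<open>r > 0\<close> the right-hand side \<open>h' = 1 + h\<^sup>2 - 2 r h\<close> is positive and,
  as both \<open>h\<^sup>2\<close> and \<open>r |h|\<close> decrease, strictly decreasing: \<open>h\<close> is increasing and concave
  on \<open>(z\<^sub>w, z\<^sub>*]\<close>. By the mean value theorem a Newton step for such a function moves right
  without passing \<open>z\<^sub>*\<close>, so the iterates increase to a limit, which is a fixed point of the
  continuous Newton map and hence \<open>z\<^sub>*\<close>. The case right of \<open>z\<^sub>*\<close> is the mirror image
  under \<open>z \<mapsto> -z\<close>, \<open>h \<mapsto> -h(-z)\<close>, \<open>r \<mapsto> -r(-z)\<close>, which preserves the Riccati equation,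
  the monotonicity of \<open>r\<close> and the Newton map.
\<close>

lemma funpow_incseq_tendsto:
  fixes N :: "real \<Rightarrow> real"
  assumes "a < z0" "z0 < c"
    and step: "\<And>z. a < z \<Longrightarrow> z < c \<Longrightarrow> z < N z \<and> N z < c"
    and cont: "\<And>z. a < z \<Longrightarrow> z < c \<Longrightarrow> isCont N z"
  shows "(\<forall>n. (N ^^ n) z0 \<in> {z0..<c}) \<and> incseq (\<lambda>n. (N ^^ n) z0) \<and> (\<lambda>n. (N ^^ n) z0) \<longlonglongrightarrow> c"
proof -
  define X where "X n = (N ^^ n) z0" for n
  have X_Suc: "X (Suc n) = N (X n)" for n
    by (simp add: X_def)
  have X_range: "X n \<in> {z0..<c}" for n
  proof (induction n)
    case 0
    then show ?case using assms(2) by (simp add: X_def)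
  next
    case (Suc n)
    then show ?case using step[of "X n"] assms(1) by (force simp: X_Suc)
  qed
  have "X n < X (Suc n)" for n
    using step[of "X n"] X_range[of n] assms(1) by (force simp: X_Suc)
  then have "incseq X"
    by (intro incseq_SucI less_imp_le)
  moreover have X_le: "\<forall>n. X n \<le> c"
    using X_range by (simp add: less_imp_le)
  ultimately obtain L where L: "X \<longlonglongrightarrow> L" "\<And>n. X n \<le> L"
    using incseq_convergent by blast
  have "a < L"
    using L(2)[of 0] assms(1) by (simp add: X_def)
  have "L \<le> c"
    using LIMSEQ_le_const2[OF L(1)] X_le by blast
  have "L = c"
  proof (rule ccontr)
    assume "L \<noteq> c"
    with \<open>L \<le> c\<close> have "L < c"
      by simp
    have "(\<lambda>n. N (X n)) \<longlonglongrightarrow> N L"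
      using isCont_tendsto_compose[OF cont[OF \<open>a < L\<close> \<open>L < c\<close>] L(1)] .
    moreover have "(\<lambda>n. N (X n)) \<longlonglongrightarrow> L"
      using LIMSEQ_Suc[OF L(1)] by (simp add: X_Suc)
    ultimately have "N L = L"
      using LIMSEQ_unique by blast
    then show False
      using step[OF \<open>a < L\<close> \<open>L < c\<close>] by simp
  qed
  then show ?thesis
    using X_range \<open>incseq X\<close> L(1) unfolding X_def by auto
qed

lemma DERIV_pos_root_imp_neg_left:
  fixes h :: "real \<Rightarrow> real"
  assumes "(h has_real_derivative d) (at b)" "0 < d" "h b = 0"
    and cont: "continuous_on {a<..b} h"
    and nonzero: "\<And>z. a < z \<Longrightarrow> z < b \<Longrightarrow> h z \<noteq> 0"
    and "a < z" "z < b"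
  shows "h z < 0"
proof (rule ccontr)
  assume "\<not> h z < 0"
  with nonzero assms(6,7) have "0 < h z"
    by force
  obtain \<delta> where "0 < \<delta>" and \<delta>: "\<And>t. 0 < t \<Longrightarrow> t < \<delta> \<Longrightarrow> h (b - t) < 0"
    using DERIV_pos_inc_left[OF assms(1,2)] \<open>h b = 0\<close> by auto
  define y where "y = (max z (b - \<delta>) + b) / 2"
  have "z < y" "y < b" "b - y < \<delta>"
    using \<open>z < b\<close> \<open>0 < \<delta>\<close> unfolding y_def max_def by (auto simp: field_simps)
  then have "h y < 0"
    using \<delta>[of "b - y"] by simp
  moreover have "continuous_on {z..y} h"
    using \<open>a < z\<close> \<open>y < b\<close> by (intro continuous_on_subset[OF cont]) auto
  ultimately obtain x where "z \<le> x" "x \<le> y" "h x = 0"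
    using IVT2'[of h y 0 z] \<open>0 < h z\<close> \<open>z < y\<close> by auto
  then show False
    using nonzero[of x] \<open>a < z\<close> \<open>y < b\<close> by auto
qed

lemma riccati_rhs_strict_antimono:
  fixes hx hy rx ry :: real
  assumes "hx < hy" "hy \<le> 0" "0 \<le> ry" "ry \<le> rx"
  shows "1 + hy\<^sup>2 - 2 * ry * hy < 1 + hx\<^sup>2 - 2 * rx * hx"
proof -
  have "(- hy)\<^sup>2 < (- hx)\<^sup>2"
    using assms(1,2) by (intro power_strict_mono) auto
  moreover have "ry * - hy \<le> rx * - hx"
    using assms by (intro mult_mono) auto
  ultimately show ?thesis
    by simp
qed

lemma newton_step_below_root:
  fixes f f' :: "real \<Rightarrow> real"
  assumes "z < b" "f b = 0" "f z < 0" "0 < f' z"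
    and deriv: "\<And>x. z \<le> x \<Longrightarrow> x \<le> b \<Longrightarrow> (f has_real_derivative f' x) (at x)"
    and slope: "\<And>x. z < x \<Longrightarrow> x < b \<Longrightarrow> f' x < f' z"
  shows "z < z - f z / f' z \<and> z - f z / f' z < b"
proof -
  obtain \<xi> where "z < \<xi>" "\<xi> < b" and mvt: "f b - f z = (b - z) * f' \<xi>"
    using MVT2[OF \<open>z < b\<close> deriv] by blast
  have "- f z < (b - z) * f' z"
    using mvt slope[OF \<open>z < \<xi>\<close> \<open>\<xi> < b\<close>] \<open>z < b\<close> \<open>f b = 0\<close>
    by (metis diff_gt_0_iff_gt diff_0 mult_strict_left_mono)
  then have "- f z / f' z < b - z"
    using \<open>0 < f' z\<close> by (metis pos_divide_less_eq)
  moreover have "0 < - f z / f' z"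
    using \<open>f z < 0\<close> \<open>0 < f' z\<close> by (simp add: divide_neg_pos)
  ultimately show ?thesis
    by simp
qed

locale riccati_left_of_root =
  fixes a b :: real and r h :: "real \<Rightarrow> real"
  assumes a_less_b: "a < b"
    and r_cont: "\<And>z. a < z \<Longrightarrow> z < b \<Longrightarrow> isCont r z"
    and r_antimono: "\<And>x y. a < x \<Longrightarrow> x \<le> y \<Longrightarrow> y < b \<Longrightarrow> r y \<le> r x"
    and r_pos: "\<And>z. a < z \<Longrightarrow> z < b \<Longrightarrow> 0 < r z"
    and h_deriv: "\<And>z. a < z \<Longrightarrow> z \<le> b \<Longrightarrow>
      (h has_real_derivative 1 + (h z)\<^sup>2 - 2 * r z * h z) (at z)"
    and h_root: "h b = 0"
    and h_nonzero: "\<And>z. a < z \<Longrightarrow> z < b \<Longrightarrow> h z \<noteq> 0"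
begin

abbreviation riccati_rhs :: "real \<Rightarrow> real" where
  "riccati_rhs z \<equiv> 1 + (h z)\<^sup>2 - 2 * r z * h z"

lemma h_cont: "a < z \<Longrightarrow> z \<le> b \<Longrightarrow> isCont h z"
  using DERIV_isCont h_deriv by blast

lemma h_neg: "a < z \<Longrightarrow> z < b \<Longrightarrow> h z < 0"
  using h_deriv[of b] a_less_b h_root h_nonzero
  by (intro DERIV_pos_root_imp_neg_left[where a = a and b = b])
    (auto intro!: continuous_at_imp_continuous_on h_cont)

lemma riccati_rhs_pos:
  assumes "a < z" "z < b"
  shows "0 < riccati_rhs z"
  using mult_pos_neg[OF r_pos[OF assms] h_neg[OF assms]] zero_le_power2[of "h z"] by linarith

lemma h_strict_mono:
  assumes "a < x" "x < y" "y < b"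
  shows "h x < h y"
proof (rule DERIV_pos_imp_increasing[OF \<open>x < y\<close>])
  fix t assume "x \<le> t" "t \<le> y"
  with assms show "\<exists>d. (h has_real_derivative d) (at t) \<and> 0 < d"
    by (intro exI[of _ "riccati_rhs t"] conjI h_deriv riccati_rhs_pos) auto
qed

lemma riccati_rhs_strict_antimono_left:
  assumes "a < x" "x < y" "y < b"
  shows "riccati_rhs y < riccati_rhs x"
  using assms
  by (intro riccati_rhs_strict_antimono h_strict_mono less_imp_le[OF h_neg]
      less_imp_le[OF r_pos] r_antimono) auto

lemma newton_step:
  assumes "a < z" "z < b"
  shows "z < newton_map h r z \<and> newton_map h r z < b"
  unfolding newton_map_def using assms h_root h_neg riccati_rhs_pos riccati_rhs_strict_antimono_left
  by (intro newton_step_below_root[of _ _ h riccati_rhs]) (auto intro!: h_deriv)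

lemma newton_map_isCont: "a < z \<Longrightarrow> z < b \<Longrightarrow> isCont (newton_map h r) z"
  using h_cont[of z] r_cont[of z] riccati_rhs_pos[of z] unfolding newton_map_def
  by (intro continuous_intros) auto

theorem newton_iterates_increase_to_root:
  assumes "a < z0" "z0 < b"
  shows "iterates_well_defined a b h r z0 \<and> incseq (\<lambda>n. (newton_map h r ^^ n) z0) \<and>
    (\<lambda>n. (newton_map h r ^^ n) z0) \<longlonglongrightarrow> b"
proof -
  have iterates: "(\<forall>n. (newton_map h r ^^ n) z0 \<in> {z0..<b}) \<and> incseq (\<lambda>n. (newton_map h r ^^ n) z0) \<and>
    (\<lambda>n. (newton_map h r ^^ n) z0) \<longlonglongrightarrow> b"
    using assms newton_step newton_map_isCont by (rule funpow_incseq_tendsto)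
  moreover have "iterates_well_defined a b h r z0"
    unfolding iterates_well_defined_def
  proof
    fix n
    let ?z = "(newton_map h r ^^ n) z0"
    have "?z \<in> {z0..<b}"
      using iterates by blast
    then have "a < ?z" "?z < b"
      using \<open>a < z0\<close> by auto
    then show "?z \<in> {a<..<b} \<and> riccati_rhs ?z \<noteq> 0"
      using riccati_rhs_pos[of ?z] by auto
  qed
  ultimately show ?thesis
    by blast
qed

end

lemma newton_map_reflect:
  "newton_map (\<lambda>z. - h (- z)) (\<lambda>z. - r (- z)) z = - newton_map h r (- z)"
  by (simp add: newton_map_def)

lemma funpow_newton_map_reflect:
  "(newton_map (\<lambda>z. - h (- z)) (\<lambda>z. - r (- z)) ^^ n) z = - (newton_map h r ^^ n) (- z)"
  by (induction n arbitrary: z) (simp_all add: newton_map_reflect)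

lemma iterates_well_defined_reflect:
  "iterates_well_defined (- b) (- a) (\<lambda>z. - h (- z)) (\<lambda>z. - r (- z)) (- z0) \<longleftrightarrow>
    iterates_well_defined a b h r z0"
  by (simp add: iterates_well_defined_def funpow_newton_map_reflect conj_commute)

lemma iterates_well_defined_mono:
  assumes "iterates_well_defined a b h r z0" "a' \<le> a" "b \<le> b'"
  shows "iterates_well_defined a' b' h r z0"
  using assms unfolding iterates_well_defined_def
  by (metis greaterThanLessThan_iff order_le_less_trans order_less_le_trans)

lemma newton_iterates_decrease_to_root:
  fixes a b z0 :: real and r h :: "real \<Rightarrow> real"
  assumes "a < b"
    and r_cont: "\<And>z. a < z \<Longrightarrow> z < b \<Longrightarrow> isCont r z"
    and r_antimono: "\<And>x y. a < x \<Longrightarrow> x \<le> y \<Longrightarrow> y < b \<Longrightarrow> r y \<le> r x"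
    and r_neg: "\<And>z. a < z \<Longrightarrow> z < b \<Longrightarrow> r z < 0"
    and h_deriv: "\<And>z. a \<le> z \<Longrightarrow> z < b \<Longrightarrow>
      (h has_real_derivative 1 + (h z)\<^sup>2 - 2 * r z * h z) (at z)"
    and "h a = 0"
    and h_nonzero: "\<And>z. a < z \<Longrightarrow> z < b \<Longrightarrow> h z \<noteq> 0"
    and "a < z0" "z0 < b"
  shows "iterates_well_defined a b h r z0 \<and> decseq (\<lambda>n. (newton_map h r ^^ n) z0) \<and>
    (\<lambda>n. (newton_map h r ^^ n) z0) \<longlonglongrightarrow> a"
proof -
  define h' :: "real \<Rightarrow> real" where "h' = (\<lambda>z. - h (- z))"
  define r' :: "real \<Rightarrow> real" where "r' = (\<lambda>z. - r (- z))"
  have h'_deriv: "(h' has_real_derivative 1 + (h' z)\<^sup>2 - 2 * r' z * h' z) (at z)"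
    if "- b < z" "z \<le> - a" for z
    using DERIV_minus[OF iffD1[OF DERIV_mirror h_deriv[of "- z"]]] that
    by (simp add: h'_def r'_def)
  interpret reflected: riccati_left_of_root "- b" "- a" r' h'
  proof
    show "isCont r' z" if "- b < z" "z < - a" for z
      unfolding r'_def using that
      by (intro isCont_minus isCont_o2[where f = uminus and g = r] continuous_intros r_cont) auto
    show "r' y \<le> r' x" if "- b < x" "x \<le> y" "y < - a" for x y
      using r_antimono[of "- y" "- x"] that by (simp add: r'_def)
    show "0 < r' z" if "- b < z" "z < - a" for z
      using r_neg[of "- z"] that by (simp add: r'_def)
    show "h' z \<noteq> 0" if "- b < z" "z < - a" for z
      using h_nonzero[of "- z"] that by (simp add: h'_def)
  qed (use assms h'_deriv in \<open>simp_all add: h'_def\<close>)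
  have "iterates_well_defined (- b) (- a) h' r' (- z0) \<and>
      incseq (\<lambda>n. (newton_map h' r' ^^ n) (- z0)) \<and> (\<lambda>n. (newton_map h' r' ^^ n) (- z0)) \<longlonglongrightarrow> - a"
    using assms by (intro reflected.newton_iterates_increase_to_root) simp_all
  then show ?thesis
    unfolding h'_def r'_def funpow_newton_map_reflect iterates_well_defined_reflect
    by (simp add: decseq_eq_incseq tendsto_minus_cancel_left)
qed

theorem theorem3p8:
  fixes zw zw' zs :: real and r h :: "real \<Rightarrow> real"
  assumes "zw < zw'"
    and "\<forall>z\<in>{zw<..<zw'}. r differentiable (at z)"
    and "\<forall>x\<in>{zw<..<zw'}. \<forall>y\<in>{zw<..<zw'}. x \<le> y \<longrightarrow> r y \<le> r x"
    and "\<forall>z\<in>{zw<..<zw'}. (h has_real_derivative (1 + (h z)\<^sup>2 - 2 * r z * h z)) (at z)"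
    and "zs \<in> {zw<..<zw'}" and "h zs = 0"
    and "\<forall>z\<in>{zw<..<zw'}. h z = 0 \<longrightarrow> z = zs"
  shows "((\<forall>z\<in>{zw<..<zs}. r z > 0) \<longrightarrow>
           (\<forall>z0\<in>{zw<..<zs}. iterates_well_defined zw zw' h r z0 \<and>
              incseq (\<lambda>n. (newton_map h r ^^ n) z0) \<and>
              (\<lambda>n. (newton_map h r ^^ n) z0) \<longlonglongrightarrow> zs))
       \<and> ((\<forall>z\<in>{zs<..<zw'}. r z < 0) \<longrightarrow>
           (\<forall>z0\<in>{zs<..<zw'}. iterates_well_defined zw zw' h r z0 \<and>
              decseq (\<lambda>n. (newton_map h r ^^ n) z0) \<and>
              (\<lambda>n. (newton_map h r ^^ n) z0) \<longlonglongrightarrow> zs))"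
proof -
  have zs: "zw < zs" "zs < zw'"
    using assms(5) by auto
  have r_cont: "isCont r z" if "zw < z" "z < zw'" for z
    using assms(2) that DERIV_isCont real_differentiable_def by fastforce
  have r_antimono: "r y \<le> r x" if "zw < x" "x \<le> y" "y < zw'" for x y
    using assms(3) that by auto
  have h_deriv: "(h has_real_derivative 1 + (h z)\<^sup>2 - 2 * r z * h z) (at z)"
    if "zw < z" "z < zw'" for z
    using assms(4) that by auto
  have h_nonzero: "h z \<noteq> 0" if "zw < z" "z < zw'" "z \<noteq> zs" for z
    using assms(7) that by auto
  show ?thesis
  proof (rule conjI; intro impI ballI)
    fix z0 assume "\<forall>z\<in>{zw<..<zs}. 0 < r z" "z0 \<in> {zw<..<zs}"
    then interpret riccati_left_of_root zw zs r h
      using zs \<open>h zs = 0\<close> r_cont r_antimono h_deriv h_nonzero by unfold_locales simp_all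
    have "iterates_well_defined zw zs h r z0 \<and> incseq (\<lambda>n. (newton_map h r ^^ n) z0) \<and>
        (\<lambda>n. (newton_map h r ^^ n) z0) \<longlonglongrightarrow> zs"
      using \<open>z0 \<in> {zw<..<zs}\<close> by (intro newton_iterates_increase_to_root) simp_all
    then show "iterates_well_defined zw zw' h r z0 \<and> incseq (\<lambda>n. (newton_map h r ^^ n) z0) \<and>
        (\<lambda>n. (newton_map h r ^^ n) z0) \<longlonglongrightarrow> zs"
      using iterates_well_defined_mono[of zw zs h r z0 zw zw'] zs by simp
  next
    fix z0 assume "\<forall>z\<in>{zs<..<zw'}. r z < 0" "z0 \<in> {zs<..<zw'}"
    then have "iterates_well_defined zs zw' h r z0 \<and> decseq (\<lambda>n. (newton_map h r ^^ n) z0) \<and>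
        (\<lambda>n. (newton_map h r ^^ n) z0) \<longlonglongrightarrow> zs"
      using zs \<open>h zs = 0\<close> r_cont r_antimono h_deriv h_nonzero
      by (intro newton_iterates_decrease_to_root) simp_all
    then show "iterates_well_defined zw zw' h r z0 \<and> decseq (\<lambda>n. (newton_map h r ^^ n) z0) \<and>
        (\<lambda>n. (newton_map h r ^^ n) z0) \<longlonglongrightarrow> zs"
      using iterates_well_defined_mono[of zs zw' h r z0 zw zw'] zs by simp
  qed
qed

end
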